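(* Let $n>1$ and let $\varphi:\mathcal A\to\mathcal A$ be a continuous, multiplicative (i.e. $\varphi(AB)=\varphi(A)\varphi(B)$), norm preserving (i.e. $\|\varphi(A)\|=\|A\|$) map, not assumed linear, such that $\varphi(S)=S$. Then $\varphi$ is either homogeneous, i.e. $\varphi(\alpha A)=\alpha\varphi(A)$ for all $\alpha\in\mathbb C$, $A\in\mathcal A$, or skew-homogeneous, i.e. $\varphi(\alpha A)=\overline{\alpha}\varphi(A)$ for all $\alpha\in\mathbb C$, $A\in\mathcal A$.
   Context: $S$ denotes the $n\times n$ nilpotent Jordan block with ones on the superdiagonal and zeros elsewhere. $\mathcal A=\{f(S): f\text{ a complex polynomial}\}$ is the algebra of $n\times n$ upper-triangular Toeplitz matrices. $\|\cdot\|$ is the operator norm on $M_n(\mathbb C)$ induced by the Euclidean norm on $\mathbb C^n$. *)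

theory Defs
  imports "Jordan_Normal_Form.Matrix" "HOL-Computational_Algebra.Polynomial"
begin

definition Smat :: "nat \<Rightarrow> complex mat" where
  "Smat n = mat n n (\<lambda>(i,j). if j = Suc i then 1 else 0)"

definition poly_mat :: "complex poly \<Rightarrow> complex mat \<Rightarrow> complex mat" where
  "poly_mat p A = foldr (\<lambda>c B. c \<cdot>\<^sub>m 1\<^sub>m (dim_row A) + A * B) (coeffs p)
                        (0\<^sub>m (dim_row A) (dim_row A))"

text \<open>The algebra of upper-triangular Toeplitz matrices: all f(S).\<close>
definition Alg :: "nat \<Rightarrow> complex mat set" where
  "Alg n = {A. \<exists>p. A = poly_mat p (Smat n)}"

definition vec_norm :: "complex vec \<Rightarrow> real" where
  "vec_norm v = sqrt (\<Sum>i<dim_vec v. (cmod (v $ i))\<^sup>2)"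

definition op_norm :: "complex mat \<Rightarrow> real" where
  "op_norm A = Sup {vec_norm (A *\<^sub>v v) | v. v \<in> carrier_vec (dim_col A) \<and> vec_norm v \<le> 1}"

end

theory Submission
  imports Defs
begin

text \<open>An upper-triangular Toeplitz matrix is determined by its first row, so \<open>\<phi>\<close> induces a map
  \<open>\<Phi>\<close> on coefficient sequences that is multiplicative for convolution and, since \<open>\<phi> S = S\<close>, fixes
  the coefficients of every power \<open>S\<^sup>m\<close>, \<open>m \<ge> 1\<close>. Multiplying by a suitable power of \<open>S\<close> shows that the
  \<open>k\<close>-th coefficient of \<open>\<phi> A\<close> only depends on the first \<open>k + 1\<close> coefficients of \<open>A\<close>. Hence the
  corner entry \<open>\<gamma> \<alpha>\<close> of \<open>\<phi> (\<alpha> I)\<close> is multiplicative in \<open>\<alpha>\<close>, and the entry \<open>\<kappa> c\<close> of \<open>\<phi> (I + c S)\<close>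
  next to the diagonal is additive in \<open>c\<close>. Norm preservation gives \<open>|\<gamma> \<alpha>| = |\<alpha>|\<close> and then
  \<open>\<phi> (\<alpha> I) = \<gamma> \<alpha> I\<close>, so \<open>\<phi> (\<alpha> A) = \<gamma> \<alpha> \<phi> A\<close>. Continuity at \<open>S\<close>, applied to
  \<open>\<epsilon> I + S = \<epsilon> (I + \<epsilon>\<inverse> S)\<close>, yields \<open>\<gamma> \<epsilon> \<kappa> (1/\<epsilon>) \<rightarrow> 1\<close> as \<open>\<epsilon> \<rightarrow> 0\<close>; by the multiplicativity of
  \<open>\<gamma>\<close> and additivity of \<open>\<kappa>\<close> this product is then a nonzero constant, so \<open>w \<mapsto> 1 / \<gamma> (1/w)\<close> is an
  additive, multiplicative isometry of \<open>\<complex>\<close>: the identity or complex conjugation.\<close>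

definition toeplitz :: "nat \<Rightarrow> (nat \<Rightarrow> complex) \<Rightarrow> complex mat" where
  "toeplitz n c = mat n n (\<lambda>(i,j). if i \<le> j then c (j - i) else 0)"

definition convolution :: "(nat \<Rightarrow> complex) \<Rightarrow> (nat \<Rightarrow> complex) \<Rightarrow> nat \<Rightarrow> complex" where
  "convolution a b k = (\<Sum>l\<le>k. a l * b (k - l))"

definition unit_seq :: "nat \<Rightarrow> nat \<Rightarrow> complex" where
  "unit_seq m k = (if k = m then 1 else 0)"

lemma toeplitz_carrier [simp]: "toeplitz n c \<in> carrier_mat n n"
  and dim_row_toeplitz [simp]: "dim_row (toeplitz n c) = n"
  and dim_col_toeplitz [simp]: "dim_col (toeplitz n c) = n"
  by (auto simp: toeplitz_def)

lemma index_toeplitz [simp]: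
  "i < n \<Longrightarrow> j < n \<Longrightarrow> toeplitz n c $$ (i,j) = (if i \<le> j then c (j - i) else 0)"
  by (simp add: toeplitz_def)

lemma toeplitz_cong: "(\<And>k. k < n \<Longrightarrow> a k = b k) \<Longrightarrow> toeplitz n a = toeplitz n b"
  by (rule eq_matI) auto

lemma toeplitz_eq_iff: "toeplitz n a = toeplitz n b \<longleftrightarrow> (\<forall>k<n. a k = b k)"
proof (intro iffI allI impI)
  fix k assume "toeplitz n a = toeplitz n b" and "k < n"
  then have "toeplitz n a $$ (0,k) = toeplitz n b $$ (0,k)" by simp
  with \<open>k < n\<close> show "a k = b k" by simp
qed (auto intro: toeplitz_cong)

lemma toeplitz_add: "toeplitz n a + toeplitz n b = toeplitz n (\<lambda>k. a k + b k)"
  by (rule eq_matI) auto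

lemma toeplitz_minus: "toeplitz n a - toeplitz n b = toeplitz n (\<lambda>k. a k - b k)"
  by (rule eq_matI) auto

lemma smult_toeplitz: "\<alpha> \<cdot>\<^sub>m toeplitz n a = toeplitz n (\<lambda>k. \<alpha> * a k)"
  by (rule eq_matI) auto

lemma zero_mat_eq_toeplitz: "0\<^sub>m n n = toeplitz n (\<lambda>k. 0)"
  by (rule eq_matI) auto

lemma one_mat_eq_toeplitz: "1\<^sub>m n = toeplitz n (unit_seq 0)"
  by (rule eq_matI) (auto simp: unit_seq_def)

lemma smult_one_mat_eq_toeplitz: "\<alpha> \<cdot>\<^sub>m 1\<^sub>m n = toeplitz n (\<lambda>k. \<alpha> * unit_seq 0 k)"
  by (simp add: one_mat_eq_toeplitz smult_toeplitz)

lemma Smat_eq_toeplitz: "Smat n = toeplitz n (unit_seq 1)"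
  by (rule eq_matI) (auto simp: unit_seq_def Smat_def)

lemma toeplitz_mult: "toeplitz n a * toeplitz n b = toeplitz n (convolution a b)"
proof (rule eq_matI)
  fix i j assume i: "i < dim_row (toeplitz n (convolution a b))"
    and j: "j < dim_col (toeplitz n (convolution a b))"
  let ?t = "\<lambda>m. (if i \<le> m then a (m - i) else 0) * (if m \<le> j then b (j - m) else 0)"
  have "(toeplitz n a * toeplitz n b) $$ (i,j) = (\<Sum>m<n. ?t m)"
    using i j by (simp add: scalar_prod_def lessThan_atLeast0)
  also have "\<dots> = (\<Sum>m\<in>{i..j}. ?t m)"
    using j by (intro sum.mono_neutral_right) auto
  also have "\<dots> = (\<Sum>m\<in>{i..j}. a (m - i) * b (j - m))"
    by (rule sum.cong) auto
  also have "\<dots> = toeplitz n (convolution a b) $$ (i,j)"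
  proof (cases "i \<le> j")
    case True
    then have "(\<Sum>m\<in>{i..j}. a (m - i) * b (j - m)) = (\<Sum>l\<le>j - i. a l * b (j - i - l))"
      using sum.shift_bounds_cl_nat_ivl[of "\<lambda>m. a (m - i) * b (j - m)" 0 i "j - i"]
      by (simp add: atLeast0AtMost add.commute diff_diff_left)
    with True i j show ?thesis by (simp add: convolution_def)
  qed (use i j in simp)
  finally show "(toeplitz n a * toeplitz n b) $$ (i,j) = toeplitz n (convolution a b) $$ (i,j)" .
qed auto

lemma convolution_unit_seq_right:
  "convolution a (unit_seq m) k = (if m \<le> k then a (k - m) else 0)"
proof -
  have "convolution a (unit_seq m) k = (\<Sum>l\<le>k. if l = k - m \<and> m \<le> k then a l else 0)"
    unfolding convolution_def unit_seq_def by (rule sum.cong) auto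
  then show ?thesis by (simp cong: conj_cong)
qed

lemma convolution_unit_seq_left:
  "convolution (unit_seq m) a k = (if m \<le> k then a (k - m) else 0)"
proof -
  have "convolution (unit_seq m) a k = (\<Sum>l\<le>k. if l = m then a (k - l) else 0)"
    unfolding convolution_def unit_seq_def by (rule sum.cong) auto
  then show ?thesis by simp
qed

lemma convolution_0 [simp]: "convolution a b 0 = a 0 * b 0"
  by (simp add: convolution_def)

lemma convolution_1: "convolution a b 1 = a 0 * b 1 + a 1 * b 0"
  by (simp add: convolution_def atMost_Suc)

lemma convolution_cong:
  "(\<And>j. j \<le> k \<Longrightarrow> a j = a' j) \<Longrightarrow> (\<And>j. j \<le> k \<Longrightarrow> b j = b' j)
    \<Longrightarrow> convolution a b k = convolution a' b' k"
  unfolding convolution_def by (intro sum.cong) auto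

lemma poly_mat_Smat: "poly_mat p (Smat n) = toeplitz n (coeff p)"
proof (induction p rule: pCons_induct)
  case 0
  show ?case by (simp add: poly_mat_def Smat_def zero_mat_eq_toeplitz)
next
  case (pCons a p)
  then have "coeffs (pCons a p) = a # coeffs p" by auto
  then have "poly_mat (pCons a p) (Smat n) = a \<cdot>\<^sub>m 1\<^sub>m n + Smat n * poly_mat p (Smat n)"
    unfolding poly_mat_def by (simp add: Smat_def)
  also have "\<dots> = toeplitz n (coeff (pCons a p))"
    unfolding pCons.IH unfolding smult_one_mat_eq_toeplitz Smat_eq_toeplitz toeplitz_mult toeplitz_add
    by (rule toeplitz_cong) (auto simp: convolution_unit_seq_left unit_seq_def coeff_pCons split: nat.split)
  finally show ?case .
qed

lemma Alg_eq_range_toeplitz: "Alg n = range (toeplitz n)"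
proof -
  have "toeplitz n c = toeplitz n (coeff (Poly (map c [0..<n])))" for c
    by (rule toeplitz_cong) (simp add: nth_default_def)
  then show ?thesis
    unfolding Alg_def poly_mat_Smat by blast
qed

lemma toeplitz_in_Alg [simp]: "toeplitz n c \<in> Alg n"
  by (simp add: Alg_eq_range_toeplitz)

lemma Smat_in_Alg: "Smat n \<in> Alg n"
  by (simp add: Smat_eq_toeplitz)

lemma one_plus_smult_Smat_eq_toeplitz:
  "1\<^sub>m n + c \<cdot>\<^sub>m Smat n = toeplitz n (\<lambda>k. unit_seq 0 k + c * unit_seq 1 k)"
  by (simp add: one_mat_eq_toeplitz Smat_eq_toeplitz smult_toeplitz toeplitz_add)

lemma vec_norm_smult: "vec_norm (\<alpha> \<cdot>\<^sub>v v) = cmod \<alpha> * vec_norm v"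
  by (simp add: vec_norm_def norm_mult power_mult_distrib sum_distrib_left[symmetric] real_sqrt_mult)

lemma vec_norm_unit_vec:
  assumes "j < n"
  shows "vec_norm (unit_vec n j :: complex vec) = 1"
proof -
  have "(\<Sum>i<n. (cmod (unit_vec n j $ i :: complex))\<^sup>2) = (\<Sum>i<n. if i = j then 1 else 0)"
    using assms by (intro sum.cong) auto
  with assms show ?thesis by (simp add: vec_norm_def)
qed

lemma vec_norm_component_le:
  assumes "vec_norm v \<le> 1" "k < dim_vec v"
  shows "cmod (v $ k) \<le> 1"
proof -
  have "(cmod (v $ k))\<^sup>2 \<le> (\<Sum>i<dim_vec v. (cmod (v $ i))\<^sup>2)"
    using assms(2) by (intro member_le_sum) auto
  also have "\<dots> \<le> 1"
    using assms(1) by (simp add: vec_norm_def)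
  finally show ?thesis by (simp add: power_le_one_iff)
qed

lemma op_norm_bdd_above:
  assumes A: "A \<in> carrier_mat m n"
  shows "bdd_above {vec_norm (A *\<^sub>v v) | v. v \<in> carrier_vec (dim_col A) \<and> vec_norm v \<le> 1}"
proof -
  define C where "C = (\<Sum>i<m. \<Sum>k<n. cmod (A $$ (i,k)))"
  have "vec_norm (A *\<^sub>v v) \<le> sqrt (real m * C\<^sup>2)" if v: "v \<in> carrier_vec n" "vec_norm v \<le> 1" for v
  proof -
    have "cmod ((A *\<^sub>v v) $ i) \<le> C" if i: "i < m" for i
    proof -
      have "cmod ((A *\<^sub>v v) $ i) = cmod (\<Sum>k<n. A $$ (i,k) * v $ k)"
        using A v i by (simp add: scalar_prod_def lessThan_atLeast0)
      also have "\<dots> \<le> (\<Sum>k<n. cmod (A $$ (i,k)))"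
        using v vec_norm_component_le[of v]
        by (intro order.trans[OF norm_sum] sum_mono) (auto simp: norm_mult intro: mult_left_le)
      also have "\<dots> \<le> C"
        unfolding C_def using i by (intro member_le_sum) (auto intro: sum_nonneg)
      finally show ?thesis .
    qed
    then have "(\<Sum>i<m. (cmod ((A *\<^sub>v v) $ i))\<^sup>2) \<le> (\<Sum>i<m. C\<^sup>2)"
      by (intro sum_mono power_mono) auto
    then show ?thesis
      using A by (simp add: vec_norm_def)
  qed
  then show ?thesis
    using A unfolding bdd_above_def by auto
qed

lemma vec_norm_le_op_norm:
  assumes "A \<in> carrier_mat m n" "v \<in> carrier_vec n" "vec_norm v \<le> 1"
  shows "vec_norm (A *\<^sub>v v) \<le> op_norm A"
  unfolding op_norm_def by (rule cSup_upper[OF _ op_norm_bdd_above]) (use assms in auto)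

lemma column_norm_le_op_norm:
  assumes A: "A \<in> carrier_mat m n" and j: "j < n"
  shows "sqrt (\<Sum>i<m. (cmod (A $$ (i,j)))\<^sup>2) \<le> op_norm A"
proof -
  have "(A *\<^sub>v unit_vec n j) $ i = A $$ (i,j)" if "i < m" for i
    using A j that by (simp add: scalar_prod_def lessThan_atLeast0 if_distrib cong: if_cong)
  then have "vec_norm (A *\<^sub>v unit_vec n j) = sqrt (\<Sum>i<m. (cmod (A $$ (i,j)))\<^sup>2)"
    using A by (simp add: vec_norm_def)
  with vec_norm_le_op_norm[OF A unit_vec_carrier, of j] vec_norm_unit_vec[OF j] show ?thesis by simp
qed

lemma entry_le_op_norm:
  assumes "A \<in> carrier_mat m n" "i < m" "j < n"
  shows "cmod (A $$ (i,j)) \<le> op_norm A"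
proof -
  have "(cmod (A $$ (i,j)))\<^sup>2 \<le> (\<Sum>i<m. (cmod (A $$ (i,j)))\<^sup>2)"
    using assms(2) by (intro member_le_sum) auto
  then have "cmod (A $$ (i,j)) \<le> sqrt (\<Sum>i<m. (cmod (A $$ (i,j)))\<^sup>2)"
    by (simp add: real_le_rsqrt)
  with column_norm_le_op_norm[OF assms(1,3)] show ?thesis by linarith
qed

lemma op_norm_smult_one_mat:
  assumes "n > 0"
  shows "op_norm (\<alpha> \<cdot>\<^sub>m 1\<^sub>m n) = cmod \<alpha>"
proof (rule antisym)
  have "vec_norm (\<alpha> \<cdot>\<^sub>m 1\<^sub>m n *\<^sub>v v) = cmod \<alpha> * vec_norm v" if v: "v \<in> carrier_vec n" for v
  proof -
    have "\<alpha> \<cdot>\<^sub>m 1\<^sub>m n *\<^sub>v v = \<alpha> \<cdot>\<^sub>v v"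
    proof (rule eq_vecI)
      fix i assume "i < dim_vec (\<alpha> \<cdot>\<^sub>v v)"
      with v have i: "i < n" by simp
      have "(\<alpha> \<cdot>\<^sub>m 1\<^sub>m n *\<^sub>v v) $ i = (\<Sum>k\<in>{0..<n}. \<alpha> * (if k = i then 1 else 0) * v $ k)"
        using v i by (simp add: scalar_prod_def)
      also have "\<dots> = (\<Sum>k\<in>{0..<n}. if k = i then \<alpha> * v $ k else 0)"
        by (rule sum.cong) auto
      finally show "(\<alpha> \<cdot>\<^sub>m 1\<^sub>m n *\<^sub>v v) $ i = (\<alpha> \<cdot>\<^sub>v v) $ i"
        using v i by simp
    qed (use v in simp)
    then show ?thesis by (simp add: vec_norm_smult)
  qed
  then have "x \<le> cmod \<alpha>"
    if "x \<in> {vec_norm (\<alpha> \<cdot>\<^sub>m 1\<^sub>m n *\<^sub>v v) | v. v \<in> carrier_vec (dim_col (\<alpha> \<cdot>\<^sub>m 1\<^sub>m n)) \<and> vec_norm v \<le> 1}"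
    for x
    using that by (auto intro!: mult_left_le)
  moreover have "vec_norm (\<alpha> \<cdot>\<^sub>m 1\<^sub>m n *\<^sub>v 0\<^sub>v n)
      \<in> {vec_norm (\<alpha> \<cdot>\<^sub>m 1\<^sub>m n *\<^sub>v v) | v. v \<in> carrier_vec (dim_col (\<alpha> \<cdot>\<^sub>m 1\<^sub>m n)) \<and> vec_norm v \<le> 1}"
    by (intro CollectI exI[of _ "0\<^sub>v n"]) (simp add: vec_norm_def)
  ultimately show "op_norm (\<alpha> \<cdot>\<^sub>m 1\<^sub>m n) \<le> cmod \<alpha>"
    unfolding op_norm_def by (intro cSup_least) auto
  show "cmod \<alpha> \<le> op_norm (\<alpha> \<cdot>\<^sub>m 1\<^sub>m n)"
    using entry_le_op_norm[of "\<alpha> \<cdot>\<^sub>m 1\<^sub>m n" n n 0 0] assms by simp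
qed

lemma toeplitz_coeffs_le_op_norm:
  assumes "n > 0"
  shows "(\<Sum>k<n. (cmod (c k))\<^sup>2) \<le> (op_norm (toeplitz n c))\<^sup>2"
proof -
  have "(\<Sum>k<n. (cmod (c k))\<^sup>2) = (\<Sum>i<n. (cmod (toeplitz n c $$ (i, n - 1)))\<^sup>2)"
    using sum.atLeastLessThan_rev[of "\<lambda>k. (cmod (c k))\<^sup>2" 0 n]
    by (auto simp: lessThan_atLeast0 intro!: sum.cong)
  then show ?thesis
    using column_norm_le_op_norm[of "toeplitz n c" n n "n - 1"] assms by (simp add: sqrt_le_D)
qed

lemma eq_of_real_if_cmod_eq:
  fixes w :: complex
  assumes "cmod w = \<bar>r\<bar>" "cmod (w - 1) = \<bar>r - 1\<bar>"
  shows "w = of_real r"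
proof -
  have "(Re w)\<^sup>2 + (Im w)\<^sup>2 = r\<^sup>2" "(Re w - 1)\<^sup>2 + (Im w)\<^sup>2 = (r - 1)\<^sup>2"
    using assms cmod_power2[of w] cmod_power2[of "w - 1"] by simp_all
  then have "Re w = r" "Im w = 0"
    by (simp_all add: power2_eq_square algebra_simps)
  then show ?thesis by (simp add: complex_eq_iff)
qed

lemma complex_isometric_ring_hom_id_or_cnj:
  fixes l :: "complex \<Rightarrow> complex"
  assumes add: "\<And>a b. l (a + b) = l a + l b"
    and mult: "\<And>a b. l (a * b) = l a * l b"
    and norm: "\<And>z. cmod (l z) = cmod z"
  shows "l = id \<or> l = cnj"
proof -
  have l_minus: "l (a - b) = l a - l b" for a b
    using add[of "a - b" b] by simp
  have "l 1 * l 1 = l 1" "l 1 \<noteq> 0"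
    using mult[of 1 1] norm[of 1] by auto
  then have l_one: "l 1 = 1" by simp
  have l_of_real: "l (of_real r) = of_real r" for r
  proof (rule eq_of_real_if_cmod_eq)
    show "cmod (l (of_real r)) = \<bar>r\<bar>" using norm by simp
    show "cmod (l (of_real r) - 1) = \<bar>r - 1\<bar>"
      using norm[of "of_real r - 1"] norm_of_real[of "r - 1"] by (simp add: l_minus l_one)
  qed
  have "l 0 = 0"
    using add[of 0 0] by simp
  then have "(l \<i> - \<i>) * (l \<i> + \<i>) = 0"
    using mult[of \<i> \<i>] l_minus[of 0 1] l_one by (simp add: algebra_simps)
  then have l_ii: "l \<i> = \<i> \<or> l \<i> = - \<i>"
    by (auto simp: eq_neg_iff_add_eq_0)
  have l_eq: "l z = of_real (Re z) + of_real (Im z) * l \<i>" for z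
    using add[of "of_real (Re z)" "of_real (Im z) * \<i>"] mult[of "of_real (Im z)" \<i>]
    by (simp add: l_of_real complex_eq[of z, symmetric] mult.commute)
  from l_ii show ?thesis
  proof
    assume "l \<i> = \<i>"
    then have "l z = z" for z using l_eq[of z] by (simp add: complex_eq_iff)
    then show ?thesis by auto
  next
    assume "l \<i> = - \<i>"
    then have "l z = cnj z" for z using l_eq[of z] by (simp add: complex_eq_iff)
    then show ?thesis by auto
  qed
qed

lemma filterlim_divide_Suc_at_0:
  fixes z :: "'a::real_normed_field"
  assumes "z \<noteq> 0"
  shows "filterlim (\<lambda>m. z / of_nat (Suc m)) (at 0) sequentially"
  unfolding filterlim_at
  using assms LIMSEQ_Suc[OF lim_const_over_n[of z]] by (simp del: of_nat_Suc)

lemma multiplicative_additive_product_const: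
  fixes g k :: "complex \<Rightarrow> complex"
  assumes mult: "\<And>a b. g (a * b) = g a * g b" and g_one: "g 1 = 1"
    and add: "\<And>a b. k (a + b) = k a + k b"
    and lim: "((\<lambda>\<epsilon>. g \<epsilon> * k (1 / \<epsilon>)) \<longlongrightarrow> 1) (at 0)"
  shows "k 1 \<noteq> 0" and "z \<noteq> 0 \<Longrightarrow> g z * k (1 / z) = k 1"
proof -
  define h where "h z = g z * k (1 / z)" for z
  define a where "a m = of_nat (Suc m) * g (1 / of_nat (Suc m))" for m
  have k_zero: "k 0 = 0"
    using add[of 0 0] by simp
  have k_of_nat: "k (of_nat m * c) = of_nat m * k c" for m c
    by (induction m) (simp_all add: k_zero add distrib_right)
  have "h (z / of_nat (Suc m)) = a m * h z" for z m
    using mult[of z "1 / of_nat (Suc m)"] k_of_nat[of "Suc m" "1 / z"]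
    by (simp add: h_def a_def del: of_nat_Suc)
  moreover have "(\<lambda>m. h (z / of_nat (Suc m))) \<longlonglongrightarrow> 1" if "z \<noteq> 0" for z
    using filterlim_compose[OF lim filterlim_divide_Suc_at_0[OF that]] by (simp add: h_def)
  ultimately have a_lim: "(\<lambda>m. a m * h z) \<longlonglongrightarrow> 1" if "z \<noteq> 0" for z
    using that by simp
  have h_one: "h 1 = k 1"
    by (simp add: h_def g_one)
  show k_one: "k 1 \<noteq> 0"
  proof
    assume "k 1 = 0"
    then have "(\<lambda>m. a m * h 1) \<longlonglongrightarrow> 0" by (simp add: h_one)
    with a_lim[of 1] show False using LIMSEQ_unique by fastforce
  qed
  have "(\<lambda>m. a m * h 1 * (1 / k 1)) \<longlonglongrightarrow> 1 * (1 / k 1)"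
    by (intro tendsto_mult a_lim tendsto_const) simp
  then have "a \<longlonglongrightarrow> 1 / k 1"
    using k_one by (simp add: h_one)
  then have "(\<lambda>m. a m * h z) \<longlonglongrightarrow> 1 / k 1 * h z" for z
    by (intro tendsto_mult tendsto_const)
  moreover assume "z \<noteq> 0"
  ultimately have "1 / k 1 * h z = 1"
    using a_lim LIMSEQ_unique by blast
  with k_one show "g z * k (1 / z) = k 1"
    by (simp add: h_def field_simps)
qed

lemma complex_multiplicative_isometry_id_or_cnj:
  fixes g k :: "complex \<Rightarrow> complex"
  assumes mult: "\<And>a b. g (a * b) = g a * g b" and norm: "\<And>z. cmod (g z) = cmod z"
    and add: "\<And>a b. k (a + b) = k a + k b"
    and lim: "((\<lambda>\<epsilon>. g \<epsilon> * k (1 / \<epsilon>)) \<longlongrightarrow> 1) (at 0)"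
  shows "g = id \<or> g = cnj"
proof -
  have "g 1 * g 1 = g 1" "g 1 \<noteq> 0"
    using mult[of 1 1] norm[of 1] by auto
  then have g_one: "g 1 = 1" by simp
  note k_one = multiplicative_additive_product_const[OF mult g_one add lim]
  define l where "l w = k w / k 1" for w
  have l_inverse: "l w = 1 / g (1 / w)" if "w \<noteq> 0" for w
  proof -
    have "g (1 / w) \<noteq> 0"
      using norm[of "1 / w"] that by auto
    with k_one(2)[of "1 / w"] k_one(1) that show ?thesis
      by (simp add: l_def field_simps)
  qed
  have l_zero: "l 0 = 0"
    using add[of 0 0] by (simp add: l_def)
  have g_inverse: "g z = 1 / l (1 / z)" for z
    using l_inverse[of "1 / z"] norm[of 0] l_zero by (cases "z = 0") auto
  have "l = id \<or> l = cnj"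
  proof (rule complex_isometric_ring_hom_id_or_cnj)
    show "l (a + b) = l a + l b" for a b
      by (simp add: l_def add add_divide_distrib)
    show "l (a * b) = l a * l b" for a b
      using l_inverse[of a] l_inverse[of b] l_inverse[of "a * b"] mult[of "1 / a" "1 / b"]
      by (cases "a = 0 \<or> b = 0") (auto simp: l_zero)
    show "cmod (l z) = cmod z" for z
      using l_inverse[of z] norm[of "1 / z"] by (cases "z = 0") (auto simp: l_zero norm_divide)
  qed
  then show ?thesis
    by (auto simp: g_inverse[abs_def])
qed

locale toeplitz_multiplicative_map =
  fixes n :: nat and \<phi> :: "complex mat \<Rightarrow> complex mat"
  assumes n_gt_1: "n > 1"
    and maps_into_Alg: "\<forall>A \<in> Alg n. \<phi> A \<in> Alg n"
    and multiplicative: "\<forall>A \<in> Alg n. \<forall>B \<in> Alg n. \<phi> (A * B) = \<phi> A * \<phi> B"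
    and fixes_Smat: "\<phi> (Smat n) = Smat n"
begin

definition \<Phi> :: "(nat \<Rightarrow> complex) \<Rightarrow> nat \<Rightarrow> complex" where
  "\<Phi> c k = \<phi> (toeplitz n c) $$ (0, k)"

definition \<gamma> :: "complex \<Rightarrow> complex" where
  "\<gamma> \<alpha> = \<phi> (\<alpha> \<cdot>\<^sub>m 1\<^sub>m n) $$ (0, 0)"

definition \<kappa> :: "complex \<Rightarrow> complex" where
  "\<kappa> c = \<phi> (1\<^sub>m n + c \<cdot>\<^sub>m Smat n) $$ (0, 1)"

lemma \<phi>_toeplitz: "\<phi> (toeplitz n c) = toeplitz n (\<Phi> c)"
proof -
  obtain d where d: "\<phi> (toeplitz n c) = toeplitz n d"
    using maps_into_Alg by (auto simp: Alg_eq_range_toeplitz)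
  then have "\<Phi> c k = d k" if "k < n" for k
    using that by (simp add: \<Phi>_def)
  with d show ?thesis by (auto intro: toeplitz_cong)
qed

lemma \<Phi>_cong: "(\<And>j. j < n \<Longrightarrow> a j = b j) \<Longrightarrow> \<Phi> a = \<Phi> b"
  unfolding \<Phi>_def[abs_def] by (metis toeplitz_cong)

lemma \<Phi>_convolution:
  assumes "k < n"
  shows "\<Phi> (convolution a b) k = convolution (\<Phi> a) (\<Phi> b) k"
proof -
  have "\<phi> (toeplitz n a * toeplitz n b) = \<phi> (toeplitz n a) * \<phi> (toeplitz n b)"
    using multiplicative by simp
  then have "toeplitz n (\<Phi> (convolution a b)) = toeplitz n (convolution (\<Phi> a) (\<Phi> b))"
    by (simp add: \<phi>_toeplitz toeplitz_mult)
  with assms show ?thesis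
    by (simp add: toeplitz_eq_iff)
qed

lemma \<Phi>_unit_seq:
  assumes "1 \<le> m" "k < n"
  shows "\<Phi> (unit_seq m) k = unit_seq m k"
  using assms(1,2)
proof (induction m arbitrary: k rule: dec_induct)
  case base
  then show ?case
    using fixes_Smat \<phi>_toeplitz toeplitz_eq_iff by (metis Smat_eq_toeplitz)
next
  case (step m)
  have unit_seq_Suc: "unit_seq (Suc m) = convolution (unit_seq m) (unit_seq 1)"
    by (simp add: fun_eq_iff convolution_unit_seq_right) (auto simp: unit_seq_def)
  then have "\<Phi> (unit_seq (Suc m)) k = convolution (\<Phi> (unit_seq m)) (\<Phi> (unit_seq 1)) k"
    using step.prems by (simp add: \<Phi>_convolution)
  also have "\<dots> = convolution (unit_seq m) (unit_seq 1) k"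
    using step.prems step.IH \<phi>_toeplitz fixes_Smat toeplitz_eq_iff Smat_eq_toeplitz
    by (intro convolution_cong) auto
  finally show ?case
    by (simp add: unit_seq_Suc)
qed

lemma \<Phi>_cong_initial:
  assumes k: "k < n" and eq: "\<And>j. j \<le> k \<Longrightarrow> a j = b j"
  shows "\<Phi> a k = \<Phi> b k"
proof (cases "k = n - 1")
  case True
  with k eq have "\<Phi> a = \<Phi> b"
    by (intro \<Phi>_cong) simp
  then show ?thesis by simp
next
  case False
  txt \<open>Convolving with \<open>unit_seq M\<close> (multiplying by \<open>S\<^sup>M\<close>) moves coefficient \<open>k\<close> to the
    corner \<open>n - 1\<close> and pushes all higher coefficients out of the matrix.\<close>
  define M where "M = n - 1 - k"
  have M: "1 \<le> M" "M \<le> n - 1" "n - 1 - M = k"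
    using k False by (auto simp: M_def)
  have shift: "\<Phi> (convolution c (unit_seq M)) (n - 1) = \<Phi> c k" for c
  proof -
    have "\<Phi> (convolution c (unit_seq M)) (n - 1) = convolution (\<Phi> c) (\<Phi> (unit_seq M)) (n - 1)"
      using k by (simp add: \<Phi>_convolution)
    also have "\<dots> = convolution (\<Phi> c) (unit_seq M) (n - 1)"
      using M k by (intro convolution_cong) (auto simp: \<Phi>_unit_seq)
    finally show ?thesis
      using M by (simp add: convolution_unit_seq_right)
  qed
  have "\<Phi> (convolution a (unit_seq M)) = \<Phi> (convolution b (unit_seq M))"
    using M eq by (intro \<Phi>_cong) (simp add: convolution_unit_seq_right)
  then show ?thesis
    using shift by metis
qed

lemma \<Phi>_0: "\<Phi> c 0 = \<gamma> (c 0)"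
proof -
  have "\<Phi> c 0 = \<Phi> (\<lambda>k. c 0 * unit_seq 0 k) 0"
    using n_gt_1 by (intro \<Phi>_cong_initial) (auto simp: unit_seq_def)
  then show ?thesis
    by (simp add: \<gamma>_def \<Phi>_def smult_one_mat_eq_toeplitz)
qed

lemma \<Phi>_1: "c 0 = 1 \<Longrightarrow> \<Phi> c 1 = \<kappa> (c 1)"
proof -
  assume "c 0 = 1"
  then have "\<Phi> c 1 = \<Phi> (\<lambda>k. unit_seq 0 k + c 1 * unit_seq 1 k) 1"
    using n_gt_1 by (intro \<Phi>_cong_initial) (auto simp: unit_seq_def le_Suc_eq)
  then show ?thesis
    by (simp add: \<kappa>_def \<Phi>_def one_plus_smult_Smat_eq_toeplitz)
qed

lemma \<gamma>_mult: "\<gamma> (a * b) = \<gamma> a * \<gamma> b"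
  using \<Phi>_convolution[of 0 "\<lambda>k. a * unit_seq 0 k" "\<lambda>k. b * unit_seq 0 k"] n_gt_1
  by (simp add: \<Phi>_0 unit_seq_def)

lemma \<gamma>_one: "\<gamma> 1 = 1"
proof -
  have "unit_seq 1 = convolution (unit_seq 0) (unit_seq 1)"
    by (simp add: fun_eq_iff convolution_unit_seq_left)
  then have "\<Phi> (unit_seq 1) 1 = convolution (\<Phi> (unit_seq 0)) (\<Phi> (unit_seq 1)) 1"
    using n_gt_1 \<Phi>_convolution by metis
  then have "\<Phi> (unit_seq 0) 0 = 1"
    using n_gt_1 convolution_1[of "\<Phi> (unit_seq 0)" "\<Phi> (unit_seq 1)"] \<Phi>_unit_seq[of 1 0] \<Phi>_unit_seq[of 1 1]
    by (simp add: unit_seq_def)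
  then show ?thesis
    using \<Phi>_0[of "unit_seq 0"] by (simp add: unit_seq_def)
qed

lemma \<kappa>_add: "\<kappa> (c + d) = \<kappa> c + \<kappa> d"
proof -
  define u where "u c = (\<lambda>k. unit_seq 0 k + c * unit_seq 1 k)" for c
  have u: "u c 0 = 1" "u c 1 = c" for c
    by (simp_all add: u_def unit_seq_def)
  have "\<kappa> (c + d) = \<Phi> (convolution (u c) (u d)) 1"
    using \<Phi>_1[of "convolution (u c) (u d)"] convolution_1[of "u c" "u d"] u by (simp add: add.commute)
  also have "\<dots> = \<Phi> (u c) 0 * \<Phi> (u d) 1 + \<Phi> (u c) 1 * \<Phi> (u d) 0"
    using n_gt_1 convolution_1[of "\<Phi> (u c)" "\<Phi> (u d)"] by (simp add: \<Phi>_convolution)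
  also have "\<dots> = \<kappa> c + \<kappa> d"
    using \<Phi>_1[of "u c"] \<Phi>_1[of "u d"] u by (simp add: \<Phi>_0 \<gamma>_one)
  finally show ?thesis .
qed

end

locale toeplitz_isometric_map = toeplitz_multiplicative_map +
  assumes norm_preserving: "\<forall>A \<in> Alg n. op_norm (\<phi> A) = op_norm A"
begin

lemma op_norm_\<phi>_smult_one_mat: "op_norm (\<phi> (\<alpha> \<cdot>\<^sub>m 1\<^sub>m n)) = cmod \<alpha>"
  using norm_preserving n_gt_1 op_norm_smult_one_mat[of n \<alpha>] by (simp add: smult_one_mat_eq_toeplitz)

lemma cmod_\<gamma>: "cmod (\<gamma> \<alpha>) = cmod \<alpha>"
proof -
  have \<gamma>_le: "cmod (\<gamma> \<beta>) \<le> cmod \<beta>" for \<beta>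
    using entry_le_op_norm[of "\<phi> (\<beta> \<cdot>\<^sub>m 1\<^sub>m n)" n n 0 0] n_gt_1 op_norm_\<phi>_smult_one_mat[of \<beta>]
    by (simp add: \<gamma>_def smult_one_mat_eq_toeplitz \<phi>_toeplitz)
  show ?thesis
  proof (cases "\<alpha> = 0")
    case False
    have "1 = cmod (\<gamma> \<alpha>) * cmod (\<gamma> (1 / \<alpha>))"
      using \<gamma>_mult[of \<alpha> "1 / \<alpha>"] False by (simp add: \<gamma>_one flip: norm_mult)
    also have "\<dots> \<le> cmod (\<gamma> \<alpha>) * (1 / cmod \<alpha>)"
      using \<gamma>_le[of "1 / \<alpha>"] by (intro mult_left_mono) (simp_all add: norm_divide)
    finally show ?thesis
      using \<gamma>_le[of \<alpha>] False by (simp add: field_simps)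
  qed (use \<gamma>_le[of 0] in simp)
qed

text \<open>The last column of \<open>\<phi> (\<alpha> I)\<close> has Euclidean norm at most \<open>|\<alpha>|\<close>, and its
  diagonal entry \<open>\<gamma> \<alpha>\<close> already has modulus \<open>|\<alpha>|\<close>; so all other coefficients vanish.\<close>
lemma \<phi>_smult_one_mat: "\<phi> (\<alpha> \<cdot>\<^sub>m 1\<^sub>m n) = \<gamma> \<alpha> \<cdot>\<^sub>m 1\<^sub>m n"
proof -
  define d where "d = \<Phi> (\<lambda>k. \<alpha> * unit_seq 0 k)"
  have \<phi>_eq: "\<phi> (\<alpha> \<cdot>\<^sub>m 1\<^sub>m n) = toeplitz n d"
    by (simp add: d_def smult_one_mat_eq_toeplitz \<phi>_toeplitz)
  have "(cmod (d 0))\<^sup>2 + (\<Sum>k\<in>{1..<n}. (cmod (d k))\<^sup>2) = (\<Sum>k<n. (cmod (d k))\<^sup>2)"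
    using n_gt_1 by (simp add: lessThan_atLeast0 sum.atLeast_Suc_lessThan)
  also have "\<dots> \<le> (cmod \<alpha>)\<^sup>2"
    using toeplitz_coeffs_le_op_norm[of n d] n_gt_1 op_norm_\<phi>_smult_one_mat[of \<alpha>] by (simp add: \<phi>_eq)
  also have "\<dots> = (cmod (d 0))\<^sup>2"
    by (simp add: d_def \<Phi>_0 cmod_\<gamma> unit_seq_def)
  finally have "(\<Sum>k\<in>{1..<n}. (cmod (d k))\<^sup>2) \<le> 0"
    by simp
  then have "\<forall>k\<in>{1..<n}. d k = 0"
    using sum_nonneg_eq_0_iff[of "{1..<n}" "\<lambda>k. (cmod (d k))\<^sup>2"] by (simp add: antisym sum_nonneg)
  then have "toeplitz n d = toeplitz n (\<lambda>k. \<gamma> \<alpha> * unit_seq 0 k)"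
    by (intro toeplitz_cong) (auto simp: d_def \<Phi>_0 unit_seq_def)
  then show ?thesis
    using \<phi>_eq by (simp add: smult_one_mat_eq_toeplitz)
qed

lemma \<phi>_smult:
  assumes "A \<in> Alg n"
  shows "\<phi> (\<alpha> \<cdot>\<^sub>m A) = \<gamma> \<alpha> \<cdot>\<^sub>m \<phi> A"
proof -
  obtain c where c: "A = toeplitz n c"
    using assms by (auto simp: Alg_eq_range_toeplitz)
  have "\<phi> (\<alpha> \<cdot>\<^sub>m A) = \<phi> ((\<alpha> \<cdot>\<^sub>m 1\<^sub>m n) * A)"
    by (simp add: c mult_smult_assoc_mat[OF one_carrier_mat toeplitz_carrier])
  also have "\<dots> = \<phi> (\<alpha> \<cdot>\<^sub>m 1\<^sub>m n) * \<phi> A"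
    using multiplicative by (simp add: c smult_one_mat_eq_toeplitz)
  also have "\<dots> = \<gamma> \<alpha> \<cdot>\<^sub>m \<phi> A"
    by (simp add: c \<phi>_smult_one_mat \<phi>_toeplitz mult_smult_assoc_mat[OF one_carrier_mat toeplitz_carrier])
  finally show ?thesis .
qed

lemma \<gamma>_\<kappa>_tendsto:
  assumes cont: "\<forall>\<epsilon> > 0. \<exists>\<delta> > 0. \<forall>B \<in> Alg n.
                   op_norm (B - Smat n) < \<delta> \<longrightarrow> op_norm (\<phi> B - \<phi> (Smat n)) < \<epsilon>"
  shows "((\<lambda>\<epsilon>. \<gamma> \<epsilon> * \<kappa> (1 / \<epsilon>)) \<longlongrightarrow> 1) (at 0)"
  unfolding LIM_eq
proof (intro allI impI)
  fix \<eta> :: real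
  assume "\<eta> > 0"
  then obtain \<delta> where \<delta>: "\<delta> > 0"
    and close: "\<And>B. B \<in> Alg n \<Longrightarrow> op_norm (B - Smat n) < \<delta> \<Longrightarrow> op_norm (\<phi> B - Smat n) < \<eta>"
    using cont fixes_Smat by auto
  have "cmod (\<gamma> \<epsilon> * \<kappa> (1 / \<epsilon>) - 1) < \<eta>" if \<epsilon>: "\<epsilon> \<noteq> 0" "cmod \<epsilon> < \<delta>" for \<epsilon>
  proof -
    define u where "u = (\<lambda>k. unit_seq 0 k + 1 / \<epsilon> * unit_seq 1 k)"
    define B where "B = toeplitz n (\<lambda>k. \<epsilon> * unit_seq 0 k + unit_seq 1 k)"
    have "B - Smat n = \<epsilon> \<cdot>\<^sub>m 1\<^sub>m n"
      by (simp add: B_def Smat_eq_toeplitz smult_one_mat_eq_toeplitz toeplitz_minus)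
    then have "op_norm (\<phi> B - Smat n) < \<eta>"
      using close \<epsilon> n_gt_1 op_norm_smult_one_mat[of n \<epsilon>] by (simp add: B_def)
    moreover have "B = \<epsilon> \<cdot>\<^sub>m toeplitz n u"
      using \<epsilon> by (auto simp: B_def u_def smult_toeplitz algebra_simps intro: toeplitz_cong)
    then have "\<phi> B = \<gamma> \<epsilon> \<cdot>\<^sub>m toeplitz n (\<Phi> u)"
      by (simp add: \<phi>_smult \<phi>_toeplitz)
    then have "\<phi> B - Smat n = toeplitz n (\<lambda>k. \<gamma> \<epsilon> * \<Phi> u k - unit_seq 1 k)"
      by (simp add: smult_toeplitz Smat_eq_toeplitz toeplitz_minus)
    moreover have "\<Phi> u 1 = \<kappa> (1 / \<epsilon>)"
      using \<Phi>_1[of u] by (simp add: u_def unit_seq_def)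
    ultimately show ?thesis
      using entry_le_op_norm[of "\<phi> B - Smat n" n n 0 1] n_gt_1 by (simp add: unit_seq_def)
  qed
  with \<delta> show "\<exists>s>0. \<forall>\<epsilon>. \<epsilon> \<noteq> 0 \<and> norm (\<epsilon> - 0) < s \<longrightarrow> norm (\<gamma> \<epsilon> * \<kappa> (1 / \<epsilon>) - 1) < \<eta>"
    by auto
qed

end

theorem lemma2p4:
  fixes n :: nat and \<phi> :: "complex mat \<Rightarrow> complex mat"
  assumes n: "n > 1"
    and maps: "\<forall>A \<in> Alg n. \<phi> A \<in> Alg n"
    and cont: "\<forall>A \<in> Alg n. \<forall>\<epsilon> > 0. \<exists>\<delta> > 0. \<forall>B \<in> Alg n.
                 op_norm (B - A) < \<delta> \<longrightarrow> op_norm (\<phi> B - \<phi> A) < \<epsilon>"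
    and mult: "\<forall>A \<in> Alg n. \<forall>B \<in> Alg n. \<phi> (A * B) = \<phi> A * \<phi> B"
    and normp: "\<forall>A \<in> Alg n. op_norm (\<phi> A) = op_norm A"
    and fixS: "\<phi> (Smat n) = Smat n"
  shows "(\<forall>\<alpha>::complex. \<forall>A \<in> Alg n. \<phi> (\<alpha> \<cdot>\<^sub>m A) = \<alpha> \<cdot>\<^sub>m \<phi> A)
       \<or> (\<forall>\<alpha>::complex. \<forall>A \<in> Alg n. \<phi> (\<alpha> \<cdot>\<^sub>m A) = cnj \<alpha> \<cdot>\<^sub>m \<phi> A)"
proof -
  interpret toeplitz_isometric_map n \<phi>
    using n maps mult normp fixS by unfold_locales
  have "\<gamma> = id \<or> \<gamma> = cnj"
    using cont Smat_in_Alg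
    by (intro complex_multiplicative_isometry_id_or_cnj[OF \<gamma>_mult cmod_\<gamma> \<kappa>_add \<gamma>_\<kappa>_tendsto]) blast
  then show ?thesis
    using \<phi>_smult by auto
qed

end
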